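(* Let $d,K\in\mathbb{N}$, $\mathbb{T}^d=(\mathbb{R}/\mathbb{Z})^d$, $E:\mathbb{T}^d\to\mathbb{R}^d$ of class $\mathcal{C}^\infty$, and $\sigma_1,\ldots,\sigma_K:\mathbb{T}^d\times\mathbb{R}^d\to\mathbb{R}$ bounded and of class $\mathcal{C}^\infty$. Let $f_0$ be non-random, $\tau\in(0,1)$, $t_n=n\tau$, $\delta\beta_{n,k}=\beta_k(t_{n+1})-\beta_k(t_n)$. Define $f_0^{\rm mS}=f_0$ and for $n\ge0$ $$\hat f_{n+1}^{\rm mS}=S^2(\tau)S^1(\tau)f_n^{\rm mS},\qquad f_{n+1}^{\rm mS}(x,v)=\exp\Big(\sum_{k=1}^K\sigma_k(x,v)\delta\beta_{n,k}\Big)\hat f_{n+1}^{\rm mS}(x,v),$$ where $S^1(\tau)f(x,v)=f(x-\tau v,v)$ and $S^2(\tau)f(x,v)=f(x,v-\tau E(x))$. Then: (i) (Positivity) If $f_0\ge0$ on $\mathbb{T}^d\times\mathbb{R}^d$, then for any $\tau\in(0,1)$, $f_n^{\rm mS}(x,v)\ge0$ almost surely for every $n\ge0$ and all $(x,v)$. (ii) ($L^2$ norm) If $f_0\in L^2_{x,v}$ and there is a real $\sigma$ with $\sum_{k=1}^K\sigma_k(x,v)^2=\sigma^2$ for all $(x,v)$, then $f_n^{\rm mS}\in L^2(\Omega,L^2_{x,v})$ for all $n\ge0$ and $\mathbb{E}[\|f_n^{\rm mS}\|_{L^2_{x,v}}^2]=e^{2\sigma^2t_n}\|f_0\|_{L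^2_{x,v}}^2$.
   Context: $\beta_1,\ldots,\beta_K$ are independent standard real-valued Wiener processes on a filtered probability space. $L^p_{x,v}=L^p(\mathbb{T}^d\times\mathbb{R}^d)$ for Lebesgue measure. *)

theory Defs
  imports "HOL-Analysis.Analysis" "HOL-Probability.Probability"
begin

text \<open>C-infinity regularity: differentiable everywhere, and every partial
derivative (in each basis direction) is again C-infinity (coinductively,
i.e. all iterated partial derivatives exist everywhere).\<close>
coinductive smooth_fun :: "('a::euclidean_space \<Rightarrow> real) \<Rightarrow> bool" where
  "(\<forall>x. f differentiable (at x)) \<Longrightarrow>
   (\<forall>b\<in>Basis. smooth_fun (\<lambda>x. frechet_derivative f (at x) b)) \<Longrightarrow> smooth_fun f"

text \<open>Functions on the torus T^d represented as 1-periodic functions on R^d.\<close>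
definition int_vec :: "real^'d \<Rightarrow> bool" where
  "int_vec z \<longleftrightarrow> (\<forall>i. z $ i \<in> \<int>)"

definition periodic_x :: "(real^'d \<Rightarrow> 'b \<Rightarrow> 'c) \<Rightarrow> bool" where
  "periodic_x f \<longleftrightarrow> (\<forall>x v z. int_vec z \<longrightarrow> f (x + z) v = f x v)"

definition periodic_fun :: "(real^'d \<Rightarrow> 'c) \<Rightarrow> bool" where
  "periodic_fun g \<longleftrightarrow> (\<forall>x z. int_vec z \<longrightarrow> g (x + z) = g x)"

text \<open>Lebesgue measure on T^d x R^d (fundamental domain [0,1]^d for the torus).\<close>
definition mu_xv :: "((real^'d) \<times> (real^'d)) measure" where
  "mu_xv = restrict_space (lborel \<Otimes>\<^sub>M lborel) (cbox 0 One \<times> UNIV)"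

definition in_L2xv :: "(real^'d \<Rightarrow> real^'d \<Rightarrow> real) \<Rightarrow> bool" where
  "in_L2xv f \<longleftrightarrow> case_prod f \<in> borel_measurable mu_xv \<and>
     integrable mu_xv (\<lambda>(x,v). (f x v)\<^sup>2)"

definition L2xv_sq :: "(real^'d \<Rightarrow> real^'d \<Rightarrow> real) \<Rightarrow> real" where
  "L2xv_sq f = (\<integral>p. (case_prod f p)\<^sup>2 \<partial>mu_xv)"

definition std_wiener :: "'w measure \<Rightarrow> (real \<Rightarrow> 'w \<Rightarrow> real) \<Rightarrow> bool" where
  "std_wiener M W \<longleftrightarrow>
     (\<forall>t. W t \<in> borel_measurable M) \<and>
     (AE \<omega> in M. W 0 \<omega> = 0) \<and>
     (AE \<omega> in M. continuous_on {0..} (\<lambda>t. W t \<omega>)) \<and>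
     (\<forall>s t. 0 \<le> s \<and> s < t \<longrightarrow>
        distributed M lborel (\<lambda>\<omega>. W t \<omega> - W s \<omega>)
          (\<lambda>x. ennreal (normal_density 0 (sqrt (t - s)) x))) \<and>
     (\<forall>(ts::nat \<Rightarrow> real) m. 0 \<le> ts 0 \<and> (\<forall>i<m. ts i < ts (Suc i)) \<longrightarrow>
        prob_space.indep_vars M (\<lambda>_. borel)
          (\<lambda>i \<omega>. W (ts (Suc i)) \<omega> - W (ts i) \<omega>) {..<m})"

definition S1 :: "real \<Rightarrow> (real^'d \<Rightarrow> real^'d \<Rightarrow> real) \<Rightarrow> real^'d \<Rightarrow> real^'d \<Rightarrow> real" where
  "S1 \<tau> f x v = f (x - \<tau> *\<^sub>R v) v"

definition S2 :: "real \<Rightarrow> (real^'d \<Rightarrow> real^'d) \<Rightarrow> (real^'d \<Rightarrow> real^'d \<Rightarrow> real)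
     \<Rightarrow> real^'d \<Rightarrow> real^'d \<Rightarrow> real" where
  "S2 \<tau> E f x v = f x (v - \<tau> *\<^sub>R E x)"

primrec fmS :: "(real^'d \<Rightarrow> real^'d) \<Rightarrow> (nat \<Rightarrow> real^'d \<Rightarrow> real^'d \<Rightarrow> real) \<Rightarrow> nat
     \<Rightarrow> (nat \<Rightarrow> real \<Rightarrow> 'w \<Rightarrow> real) \<Rightarrow> real \<Rightarrow> (real^'d \<Rightarrow> real^'d \<Rightarrow> real)
     \<Rightarrow> nat \<Rightarrow> 'w \<Rightarrow> real^'d \<Rightarrow> real^'d \<Rightarrow> real" where
  "fmS E \<sigma> K \<beta> \<tau> f0 0 \<omega> = f0"
| "fmS E \<sigma> K \<beta> \<tau> f0 (Suc n) \<omega> =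
     (\<lambda>x v. exp (\<Sum>k=1..K. \<sigma> k x v * (\<beta> k (real (Suc n) * \<tau>) \<omega> - \<beta> k (real n * \<tau>) \<omega>))
            * S2 \<tau> E (S1 \<tau> (fmS E \<sigma> K \<beta> \<tau> f0 n \<omega>)) x v)"

end

theory Submission
  imports Defs
begin

(* Positivity is immediate: each step transports the previous iterate along the two flows and
   multiplies it by an exponential.

   For the L^2 identity, both flows preserve Lebesgue measure on T^d x R^d (free transport is a
   shear in x, which on the torus needs the periodicity of the transported function; the
   acceleration step is a shear in v), so they preserve the L^2 norm. Writing f_n as a
   deterministic function of the increments delta beta_{j,k}, whose joint law is a product of
   N(0, tau) laws, the noise factor of step n is independent of f_n, and pointwise in (x, v)
     E exp (2 sum_k sigma_k delta beta_{n,k}) = exp (2 tau sum_k sigma_k^2) = exp (2 sigma^2 tau).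
   Fubini then gives E |f_{n+1}|^2 = exp (2 sigma^2 tau) E |f_n|^2. *)

lemma borel_measurable_fst [measurable]:
  "fst \<in> borel_measurable (borel :: ('a::second_countable_topology \<times> 'b::second_countable_topology) measure)"
  by (intro borel_measurable_continuous_onI continuous_intros)

lemma borel_measurable_snd [measurable]:
  "snd \<in> borel_measurable (borel :: ('a::second_countable_topology \<times> 'b::second_countable_topology) measure)"
  by (intro borel_measurable_continuous_onI continuous_intros)

lemma borel_measurable_case_prod_compose [measurable_dest]:
  fixes g :: "'a::second_countable_topology \<Rightarrow> 'b::second_countable_topology \<Rightarrow> 'c::topological_space"
  assumes "case_prod g \<in> borel_measurable borel" "a \<in> borel_measurable M" "b \<in> borel_measurable M"
  shows "(\<lambda>x. g (a x) (b x)) \<in> borel_measurable M"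
  using measurable_comp[OF borel_measurable_Pair[OF assms(2,3)] assms(1)] by (simp add: comp_def)

lemma borel_measurable_vec_lambda:
  assumes "\<And>i. f i \<in> borel_measurable M"
  shows "(\<lambda>x. (\<chi> i. f i x) :: real^'n) \<in> borel_measurable M"
proof (subst borel_measurable_euclidean_space, intro ballI)
  fix b :: "real^'n" assume "b \<in> Basis"
  then obtain i where "b = axis i 1" unfolding Basis_vec_def by auto
  then show "(\<lambda>x. (\<chi> i. f i x) \<bullet> b) \<in> borel_measurable M"
    using assms[of i] by (simp add: inner_axis)
qed

lemma nn_integral_lborel_translate:
  fixes F :: "'a::euclidean_space \<Rightarrow> ennreal"
  assumes [measurable]: "F \<in> borel_measurable borel"
  shows "(\<integral>\<^sup>+x. F (a + x) \<partial>lborel) = (\<integral>\<^sup>+x. F x \<partial>lborel)"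
proof -
  have "(\<integral>\<^sup>+x. F (a + x) \<partial>lborel) = (\<integral>\<^sup>+x. F x \<partial>distr lborel borel ((+) a))"
    by (subst nn_integral_distr) auto
  then show ?thesis by (simp add: lborel_distr_plus)
qed

lemma nn_integral_finite_imp_enn2real:
  fixes X :: "'a \<Rightarrow> ennreal"
  assumes X: "X \<in> borel_measurable M" and fin: "(\<integral>\<^sup>+\<omega>. X \<omega> \<partial>M) < \<infinity>"
  shows "AE \<omega> in M. X \<omega> < \<infinity>"
    and "integrable M (\<lambda>\<omega>. enn2real (X \<omega>))"
    and "(\<integral>\<omega>. enn2real (X \<omega>) \<partial>M) = enn2real (\<integral>\<^sup>+\<omega>. X \<omega> \<partial>M)"
proof -
  show "AE \<omega> in M. X \<omega> < \<infinity>"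
    using nn_integral_noteq_infinite[OF X] fin by (simp add: less_top)
  then have eq: "(\<integral>\<^sup>+\<omega>. ennreal (enn2real (X \<omega>)) \<partial>M) = (\<integral>\<^sup>+\<omega>. X \<omega> \<partial>M)"
    by (intro nn_integral_cong_AE) (auto simp: less_top)
  show "integrable M (\<lambda>\<omega>. enn2real (X \<omega>))"
    using X fin eq by (intro integrableI_bounded) auto
  show "(\<integral>\<omega>. enn2real (X \<omega>) \<partial>M) = enn2real (\<integral>\<^sup>+\<omega>. X \<omega> \<partial>M)"
    using X by (subst integral_eq_nn_integral) (auto simp: eq)
qed

lemma sum_Times_singleton: "(\<Sum>i\<in>{n} \<times> A. f i) = (\<Sum>k\<in>A. f (n, k))"
proof -
  have "{n} \<times> A = Pair n ` A" by auto
  then show ?thesis by (simp add: sum.reindex inj_on_def)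
qed

lemma smooth_fun_continuous: "smooth_fun f \<Longrightarrow> continuous_on UNIV f"
  by (auto elim: smooth_fun.cases intro!: continuous_at_imp_continuous_on differentiable_imp_continuous_within)

section \<open>Lebesgue measure on the torus\<close>

definition int_lattice :: "(real^'d) set" where
  "int_lattice = {z. int_vec z}"

text \<open>Half-open, so that its lattice translates partition the space exactly; up to a null set
  it is the cube \<^term>\<open>cbox 0 One\<close> underlying \<^const>\<open>mu_xv\<close>.\<close>
definition unit_cell :: "(real^'d) set" where
  "unit_cell = {x. \<forall>i. 0 \<le> x $ i \<and> x $ i < 1}"

lemma unit_cell_borel [measurable]: "unit_cell \<in> sets borel"
  unfolding unit_cell_def by measurable

lemma of_int_vec_in_int_lattice: "(\<chi> i. real_of_int (m i)) \<in> int_lattice"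
  by (simp add: int_lattice_def int_vec_def)

lemma countable_int_lattice: "countable (int_lattice :: (real^'d) set)"
proof -
  have "int_lattice \<subseteq> range (\<lambda>m. (\<chi> i. real_of_int (m i)) :: real^'d)"
  proof
    fix z :: "real^'d" assume "z \<in> int_lattice"
    then have "z = (\<chi> i. real_of_int \<lfloor>z $ i\<rfloor>)"
      by (auto simp: int_lattice_def int_vec_def vec_eq_iff elim!: Ints_cases)
    then show "z \<in> range (\<lambda>m. \<chi> i. real_of_int (m i))"
      by (intro image_eqI[where x="\<lambda>i. \<lfloor>z $ i\<rfloor>"]) auto
  qed
  then show ?thesis by (rule countable_subset) simp
qed

lemma uminus_in_int_lattice: "z \<in> int_lattice \<Longrightarrow> - z \<in> int_lattice"
  by (simp add: int_lattice_def int_vec_def)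

lemma add_in_unit_cell_iff:
  assumes "z \<in> int_lattice"
  shows "y + z \<in> unit_cell \<longleftrightarrow> z = (\<chi> i. - real_of_int \<lfloor>y $ i\<rfloor>)"
proof -
  have "0 \<le> y $ i + z $ i \<and> y $ i + z $ i < 1 \<longleftrightarrow> z $ i = - real_of_int \<lfloor>y $ i\<rfloor>" for i
  proof -
    obtain m where m: "z $ i = of_int m"
      using assms by (auto simp: int_lattice_def int_vec_def elim!: Ints_cases)
    have "0 \<le> y $ i + of_int m \<and> y $ i + of_int m < 1 \<longleftrightarrow> \<lfloor>y $ i\<rfloor> = - m"
      unfolding floor_eq_iff by auto
    then show ?thesis using m by auto
  qed
  then show ?thesis by (auto simp: unit_cell_def vec_eq_iff)
qed

lemma nn_integral_unit_cell_translates: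
  fixes y :: "real^'d"
  shows "(\<integral>\<^sup>+z. indicator unit_cell (y + z) \<partial>count_space int_lattice) = (1::ennreal)"
proof -
  let ?z = "(\<chi> i. - real_of_int \<lfloor>y $ i\<rfloor>) :: real^'d"
  have "?z \<in> int_lattice" using of_int_vec_in_int_lattice[of "\<lambda>i. - \<lfloor>y $ i\<rfloor>"] by simp
  moreover have "(\<integral>\<^sup>+z. indicator unit_cell (y + z) \<partial>count_space int_lattice)
      = (\<integral>\<^sup>+z. indicator {?z} z \<partial>count_space int_lattice)"
    by (intro nn_integral_cong) (simp add: indicator_def add_in_unit_cell_iff)
  ultimately show ?thesis by (simp add: emeasure_count_space_finite)
qed

lemma nn_integral_unit_cell_translates_diff:
  fixes y :: "real^'d"
  shows "(\<integral>\<^sup>+z. indicator unit_cell (y - z) \<partial>count_space int_lattice) = (1::ennreal)"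
proof -
  have "bij_betw uminus int_lattice (int_lattice :: (real^'d) set)"
    by (rule bij_betwI[where g=uminus]) (auto intro: uminus_in_int_lattice)
  from nn_integral_bij_count_space[OF this, of "\<lambda>z. indicator unit_cell (y + z)"]
  show ?thesis by (simp add: nn_integral_unit_cell_translates)
qed

text \<open>Unfolding both integrals over all translates of the cell and shifting each piece back
  by a lattice vector turns the translation by \<open>c\<close> into a permutation of the pieces.\<close>

lemma nn_integral_unit_cell_translate:
  fixes h :: "real^'d \<Rightarrow> ennreal"
  assumes [measurable]: "h \<in> borel_measurable borel"
    and periodic: "\<And>x z. z \<in> int_lattice \<Longrightarrow> h (x + z) = h x"
  shows "(\<integral>\<^sup>+x. h (x + c) * indicator unit_cell x \<partial>lborel)
       = (\<integral>\<^sup>+x. h x * indicator unit_cell x \<partial>lborel)"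
proof -
  let ?L = "count_space (int_lattice :: (real^'d) set)"
  have piece: "(\<integral>\<^sup>+y. h y * indicator unit_cell (y - c) * indicator unit_cell (y + z) \<partial>lborel)
      = (\<integral>\<^sup>+w. h w * indicator unit_cell w * indicator unit_cell (w - c - z) \<partial>lborel)"
    if z: "z \<in> int_lattice" for z
  proof -
    have "(\<integral>\<^sup>+y. h y * indicator unit_cell (y - c) * indicator unit_cell (y + z) \<partial>lborel)
        = (\<integral>\<^sup>+w. h (- z + w) * indicator unit_cell (- z + w - c) * indicator unit_cell (- z + w + z) \<partial>lborel)"
      by (rule nn_integral_lborel_translate[symmetric]) simp
    also have "\<dots> = (\<integral>\<^sup>+w. h w * indicator unit_cell w * indicator unit_cell (w - c - z) \<partial>lborel)"
      using periodic[OF uminus_in_int_lattice[OF z]]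
      by (intro nn_integral_cong) (simp add: algebra_simps)
    finally show ?thesis .
  qed
  have "(\<integral>\<^sup>+x. h (x + c) * indicator unit_cell x \<partial>lborel)
      = (\<integral>\<^sup>+y. h y * indicator unit_cell (y - c) \<partial>lborel)"
    using nn_integral_lborel_translate[of "\<lambda>y. h y * indicator unit_cell (y - c)" c]
    by (simp add: add.commute)
  also have "\<dots> = (\<integral>\<^sup>+y. \<integral>\<^sup>+z. h y * indicator unit_cell (y - c) * indicator unit_cell (y + z) \<partial>?L \<partial>lborel)"
    by (simp add: nn_integral_cmult nn_integral_unit_cell_translates)
  also have "\<dots> = (\<integral>\<^sup>+z. \<integral>\<^sup>+y. h y * indicator unit_cell (y - c) * indicator unit_cell (y + z) \<partial>lborel \<partial>?L)"
    by (rule nn_integral_count_space_nn_integral[OF countable_int_lattice]) simp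
  also have "\<dots> = (\<integral>\<^sup>+z. \<integral>\<^sup>+w. h w * indicator unit_cell w * indicator unit_cell (w - c - z) \<partial>lborel \<partial>?L)"
    by (intro nn_integral_cong piece) simp
  also have "\<dots> = (\<integral>\<^sup>+w. \<integral>\<^sup>+z. h w * indicator unit_cell w * indicator unit_cell (w - c - z) \<partial>?L \<partial>lborel)"
    by (rule nn_integral_count_space_nn_integral[OF countable_int_lattice, symmetric]) simp
  also have "\<dots> = (\<integral>\<^sup>+w. h w * indicator unit_cell w \<partial>lborel)"
    by (simp add: nn_integral_cmult nn_integral_unit_cell_translates_diff)
  finally show ?thesis .
qed

lemma unit_cell_AE_cbox:
  "AE x in lborel. indicator (cbox 0 (One :: real^'d)) x = (indicator unit_cell x :: ennreal)"
proof (rule AE_I'[OF null_sets_cbox_Diff_box])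
  have "box 0 One \<subseteq> (unit_cell :: (real^'d) set)" "unit_cell \<subseteq> cbox 0 (One :: real^'d)"
    by (auto simp: unit_cell_def mem_box_cart Cart_1[symmetric] less_imp_le)
  then show "{x \<in> space lborel. indicator (cbox 0 One) x \<noteq> (indicator unit_cell x :: ennreal)}
      \<subseteq> cbox 0 One - box 0 (One :: real^'d)"
    by (auto simp: indicator_def)
qed

lemma cbox_times_UNIV_borel [measurable]:
  "cbox 0 One \<times> UNIV \<in> sets (borel :: ((real^'d) \<times> (real^'d)) measure)"
  by (intro borel_closed closed_Times) auto

lemma nn_integral_mu_xv:
  "(\<integral>\<^sup>+p. H p \<partial>mu_xv) = (\<integral>\<^sup>+p. H p * indicator (cbox 0 One \<times> UNIV) p \<partial>lborel)"
  unfolding mu_xv_def lborel_prod by (rule nn_integral_restrict_space) simp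

lemma measurable_ident_mu_xv: "(\<lambda>p. p) \<in> measurable mu_xv (borel :: ((real^'d) \<times> (real^'d)) measure)"
  unfolding mu_xv_def by (rule measurable_restrict_space1) (simp add: lborel_prod)

lemma nn_integral_mu_xv_iterated:
  fixes H :: "(real^'d) \<times> (real^'d) \<Rightarrow> ennreal"
  assumes [measurable]: "H \<in> borel_measurable borel"
  shows "(\<integral>\<^sup>+p. H p \<partial>mu_xv) = (\<integral>\<^sup>+v. \<integral>\<^sup>+x. H (x, v) * indicator unit_cell x \<partial>lborel \<partial>lborel)"
    and "(\<integral>\<^sup>+p. H p \<partial>mu_xv) = (\<integral>\<^sup>+x. indicator unit_cell x * (\<integral>\<^sup>+v. H (x, v) \<partial>lborel) \<partial>lborel)"
proof -
  have m: "(\<lambda>p. H p * indicator (cbox 0 One \<times> UNIV) p) \<in> borel_measurable (lborel \<Otimes>\<^sub>M lborel)"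
    by (simp add: lborel_prod)
  have "(\<integral>\<^sup>+p. H p \<partial>mu_xv) = (\<integral>\<^sup>+v. \<integral>\<^sup>+x. H (x, v) * indicator (cbox 0 One) x \<partial>lborel \<partial>lborel)"
    unfolding nn_integral_mu_xv lborel_prod[symmetric] lborel_pair.nn_integral_snd[OF m, symmetric]
    by (simp add: indicator_times)
  also have "\<dots> = (\<integral>\<^sup>+v. \<integral>\<^sup>+x. H (x, v) * indicator unit_cell x \<partial>lborel \<partial>lborel)"
    using unit_cell_AE_cbox by (intro nn_integral_cong nn_integral_cong_AE) (auto elim!: eventually_mono)
  finally show "(\<integral>\<^sup>+p. H p \<partial>mu_xv) = (\<integral>\<^sup>+v. \<integral>\<^sup>+x. H (x, v) * indicator unit_cell x \<partial>lborel \<partial>lborel)" .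
  have "(\<integral>\<^sup>+p. H p \<partial>mu_xv) = (\<integral>\<^sup>+x. indicator (cbox 0 One) x * (\<integral>\<^sup>+v. H (x, v) \<partial>lborel) \<partial>lborel)"
    unfolding nn_integral_mu_xv lborel_prod[symmetric] lborel.nn_integral_fst[OF m, symmetric]
    by (simp add: indicator_times nn_integral_multc mult.commute)
  also have "\<dots> = (\<integral>\<^sup>+x. indicator unit_cell x * (\<integral>\<^sup>+v. H (x, v) \<partial>lborel) \<partial>lborel)"
    using unit_cell_AE_cbox by (intro nn_integral_cong_AE) (auto elim!: eventually_mono)
  finally show "(\<integral>\<^sup>+p. H p \<partial>mu_xv) = (\<integral>\<^sup>+x. indicator unit_cell x * (\<integral>\<^sup>+v. H (x, v) \<partial>lborel) \<partial>lborel)" .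
qed

lemma nn_integral_mu_xv_free_transport:
  fixes H :: "(real^'d) \<times> (real^'d) \<Rightarrow> ennreal"
  assumes [measurable]: "H \<in> borel_measurable borel"
    and periodic: "\<And>x v z. z \<in> int_lattice \<Longrightarrow> H (x + z, v) = H (x, v)"
  shows "(\<integral>\<^sup>+p. H (fst p - t *\<^sub>R snd p, snd p) \<partial>mu_xv) = (\<integral>\<^sup>+p. H p \<partial>mu_xv)"
proof -
  have "(\<integral>\<^sup>+p. H (fst p - t *\<^sub>R snd p, snd p) \<partial>mu_xv)
      = (\<integral>\<^sup>+v. \<integral>\<^sup>+x. H (x + - (t *\<^sub>R v), v) * indicator unit_cell x \<partial>lborel \<partial>lborel)"
    by (subst nn_integral_mu_xv_iterated(1)) simp_all
  also have "\<dots> = (\<integral>\<^sup>+v. \<integral>\<^sup>+x. H (x, v) * indicator unit_cell x \<partial>lborel \<partial>lborel)"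
    by (intro nn_integral_cong nn_integral_unit_cell_translate[where h="\<lambda>x. H (x, _)"])
      (simp_all add: periodic)
  finally show ?thesis
    by (simp add: nn_integral_mu_xv_iterated(1))
qed

lemma nn_integral_mu_xv_acceleration:
  fixes H :: "(real^'d) \<times> (real^'d) \<Rightarrow> ennreal" and E :: "real^'d \<Rightarrow> real^'d"
  assumes [measurable]: "H \<in> borel_measurable borel" "E \<in> borel_measurable borel"
  shows "(\<integral>\<^sup>+p. H (fst p, snd p - t *\<^sub>R E (fst p)) \<partial>mu_xv) = (\<integral>\<^sup>+p. H p \<partial>mu_xv)"
proof -
  have "(\<integral>\<^sup>+p. H (fst p, snd p - t *\<^sub>R E (fst p)) \<partial>mu_xv)
      = (\<integral>\<^sup>+x. indicator unit_cell x * (\<integral>\<^sup>+v. H (x, - (t *\<^sub>R E x) + v) \<partial>lborel) \<partial>lborel)"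
    by (subst nn_integral_mu_xv_iterated(2)) simp_all
  also have "\<dots> = (\<integral>\<^sup>+x. indicator unit_cell x * (\<integral>\<^sup>+v. H (x, v) \<partial>lborel) \<partial>lborel)"
    by (intro nn_integral_cong arg_cong2[where f="(*)"] refl
        nn_integral_lborel_translate[where F="\<lambda>v. H (_, v)"]) simp
  finally show ?thesis
    by (simp add: nn_integral_mu_xv_iterated(2))
qed

lemma borel_measurable_periodic_x:
  fixes g :: "real^'d \<Rightarrow> real^'d \<Rightarrow> real"
  assumes g: "case_prod g \<in> borel_measurable mu_xv" and periodic: "periodic_x g"
  shows "case_prod g \<in> borel_measurable borel"
proof -
  define fl :: "real^'d \<Rightarrow> real^'d" where "fl x = (\<chi> i. real_of_int \<lfloor>x $ i\<rfloor>)" for x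
  have [measurable]: "fl \<in> borel_measurable borel"
    unfolding fl_def by (intro borel_measurable_vec_lambda) measurable
  define reduce where "reduce p = (fst p - fl (fst p), snd p)" for p :: "(real^'d) \<times> (real^'d)"
  have "reduce \<in> measurable borel mu_xv"
    unfolding mu_xv_def
  proof (rule measurable_restrict_space2)
    have "x - fl x \<in> cbox 0 One" for x
      by (auto simp: fl_def mem_box_cart Cart_1[symmetric]) linarith+
    then show "reduce \<in> space borel \<rightarrow> cbox 0 One \<times> UNIV" by (auto simp: reduce_def)
    show "reduce \<in> measurable borel (lborel \<Otimes>\<^sub>M lborel)"
      unfolding reduce_def lborel_prod by measurable
  qed
  moreover have "case_prod g \<circ> reduce = case_prod g"
  proof
    fix p :: "(real^'d) \<times> (real^'d)"
    have "int_vec (fl (fst p))" by (simp add: int_vec_def fl_def)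
    then show "(case_prod g \<circ> reduce) p = case_prod g p"
      using periodic unfolding periodic_x_def reduce_def
      by (metis (no_types, lifting) comp_apply diff_add_cancel fst_conv snd_conv split_beta)
  qed
  ultimately show ?thesis using measurable_comp[OF _ g] by metis
qed

section \<open>The squared \<open>L\<^sup>2\<close> norm and the two flows\<close>

definition L2xv_nn_sq :: "(real^'d \<Rightarrow> real^'d \<Rightarrow> real) \<Rightarrow> ennreal" where
  "L2xv_nn_sq g = (\<integral>\<^sup>+p. ennreal ((case_prod g p)\<^sup>2) \<partial>mu_xv)"

lemma L2xv_sq_eq_enn2real:
  "case_prod g \<in> borel_measurable mu_xv \<Longrightarrow> L2xv_sq g = enn2real (L2xv_nn_sq g)"
  unfolding L2xv_sq_def L2xv_nn_sq_def by (rule integral_eq_nn_integral) auto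

lemma in_L2xv_iff:
  "in_L2xv g \<longleftrightarrow> case_prod g \<in> borel_measurable mu_xv \<and> L2xv_nn_sq g < \<infinity>"
  unfolding in_L2xv_def L2xv_nn_sq_def
  by (auto simp: integrable_iff_bounded split_beta' measurable_compose[OF _ borel_measurable_power])

lemma S2_S1_eq: "S2 \<tau> E (S1 \<tau> g) x v = g (x - \<tau> *\<^sub>R (v - \<tau> *\<^sub>R E x)) (v - \<tau> *\<^sub>R E x)"
  by (simp add: S1_def S2_def)

lemma periodic_x_S2_S1:
  assumes "periodic_x g" "periodic_fun E"
  shows "periodic_x (S2 \<tau> E (S1 \<tau> g))"
proof -
  have "g (x + z - \<tau> *\<^sub>R w) w = g (x - \<tau> *\<^sub>R w) w" if "int_vec z" for x z w
    using assms(1) that unfolding periodic_x_def by (metis add_diff_eq diff_add_eq)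
  then show ?thesis
    using assms(2) by (simp add: periodic_x_def periodic_fun_def S1_def S2_def)
qed

lemma L2xv_nn_sq_S2_S1:
  fixes g :: "real^'d \<Rightarrow> real^'d \<Rightarrow> real" and E :: "real^'d \<Rightarrow> real^'d"
  assumes [measurable]: "case_prod g \<in> borel_measurable borel" "E \<in> borel_measurable borel"
    and periodic: "periodic_x g"
  shows "L2xv_nn_sq (S2 \<tau> E (S1 \<tau> g)) = L2xv_nn_sq g"
proof -
  let ?H = "\<lambda>p. ennreal ((g (fst p) (snd p))\<^sup>2)"
  have "L2xv_nn_sq (S2 \<tau> E (S1 \<tau> g))
      = (\<integral>\<^sup>+p. (\<lambda>q. ?H (fst q - \<tau> *\<^sub>R snd q, snd q)) (fst p, snd p - \<tau> *\<^sub>R E (fst p)) \<partial>mu_xv)"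
    by (simp add: L2xv_nn_sq_def S1_def S2_def split_beta')
  also have "\<dots> = (\<integral>\<^sup>+p. ?H (fst p - \<tau> *\<^sub>R snd p, snd p) \<partial>mu_xv)"
    by (rule nn_integral_mu_xv_acceleration) simp_all
  also have "\<dots> = (\<integral>\<^sup>+p. ?H p \<partial>mu_xv)"
    using periodic by (intro nn_integral_mu_xv_free_transport) (simp_all add: periodic_x_def int_lattice_def)
  finally show ?thesis by (simp add: L2xv_nn_sq_def split_beta')
qed

section \<open>Gaussian increments\<close>

definition gaussian :: "real \<Rightarrow> real measure" where
  "gaussian t = density lborel (\<lambda>x. ennreal (normal_density 0 (sqrt t) x))"

lemma sets_gaussian [simp, measurable_cong]: "sets (gaussian t) = sets borel"
  by (simp add: gaussian_def)

lemma space_gaussian [simp]: "space (gaussian t) = UNIV"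
  using sets_eq_imp_space_eq[OF sets_gaussian[of t]] by simp

lemma prob_space_gaussian: "0 < t \<Longrightarrow> prob_space (gaussian t)"
  unfolding gaussian_def by (rule prob_space_normal_density) simp

lemma product_sigma_finite_gaussian: "0 < t \<Longrightarrow> product_sigma_finite (\<lambda>_. gaussian t)"
  unfolding product_sigma_finite_def
  using prob_space_gaussian prob_space_imp_sigma_finite by blast

lemma nn_integral_exp_gaussian:
  assumes t: "0 < t"
  shows "(\<integral>\<^sup>+y. ennreal (exp (c * y)) \<partial>gaussian t) = ennreal (exp (c\<^sup>2 * t / 2))"
proof -
  \<comment> \<open>completing the square\<close>
  have shift: "normal_density 0 (sqrt t) y * exp (c * y) = exp (c\<^sup>2 * t / 2) * normal_density (c * t) (sqrt t) y" for y
  proof -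
    have "- y\<^sup>2 / (2 * t) + c * y = c\<^sup>2 * t / 2 + - (y - c * t)\<^sup>2 / (2 * t)"
      using t by (simp add: field_simps power2_eq_square)
    then show ?thesis
      using t by (simp add: normal_density_def exp_add[symmetric] mult_ac)
  qed
  have "(\<integral>\<^sup>+y. ennreal (exp (c * y)) \<partial>gaussian t)
      = (\<integral>\<^sup>+y. ennreal (exp (c\<^sup>2 * t / 2)) * ennreal (normal_density (c * t) (sqrt t) y) \<partial>lborel)"
    unfolding gaussian_def
    by (subst nn_integral_density) (simp_all add: ennreal_mult'[symmetric] shift)
  also have "\<dots> = ennreal (exp (c\<^sup>2 * t / 2))"
    using t by (simp add: nn_integral_cmult nn_integral_eq_integral integral_normal_density)
  finally show ?thesis .
qed

lemma nn_integral_exp_sum_gaussian: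
  assumes J: "finite J" and t: "0 < t"
  shows "(\<integral>\<^sup>+y. ennreal (exp (\<Sum>i\<in>J. c i * y i)) \<partial>Pi\<^sub>M J (\<lambda>_. gaussian t))
       = ennreal (exp ((\<Sum>i\<in>J. (c i)\<^sup>2) * t / 2))"
proof -
  interpret product_sigma_finite "\<lambda>_. gaussian t" by (rule product_sigma_finite_gaussian[OF t])
  have "(\<integral>\<^sup>+y. ennreal (exp (\<Sum>i\<in>J. c i * y i)) \<partial>Pi\<^sub>M J (\<lambda>_. gaussian t))
      = (\<integral>\<^sup>+y. (\<Prod>i\<in>J. ennreal (exp (c i * y i))) \<partial>Pi\<^sub>M J (\<lambda>_. gaussian t))"
    using J by (simp add: exp_sum prod_ennreal)
  also have "\<dots> = (\<Prod>i\<in>J. \<integral>\<^sup>+y. ennreal (exp (c i * y)) \<partial>gaussian t)"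
    using J by (intro product_nn_integral_prod) auto
  also have "\<dots> = ennreal (exp ((\<Sum>i\<in>J. (c i)\<^sup>2) * t / 2))"
    using t J by (simp add: nn_integral_exp_gaussian prod_ennreal exp_sum sum_distrib_right sum_divide_distrib)
  finally show ?thesis .
qed

lemma std_wiener_measurable: "std_wiener M W \<Longrightarrow> W t \<in> borel_measurable M"
  unfolding std_wiener_def by blast

lemma (in prob_space) std_wiener_increment_distr:
  assumes "std_wiener M W" "0 \<le> s" "s < t"
  shows "distr M lborel (\<lambda>\<omega>. W t \<omega> - W s \<omega>) = gaussian (t - s)"
  using assms unfolding std_wiener_def distributed_def gaussian_def by auto

lemma (in prob_space) std_wiener_grid_increments_indep:
  assumes "std_wiener M W" "0 < \<tau>"
  shows "indep_vars (\<lambda>_. borel) (\<lambda>j \<omega>. W (real (Suc j) * \<tau>) \<omega> - W (real j * \<tau>) \<omega>) {..<n}"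
  using assms unfolding std_wiener_def
  by (auto intro!: mult_strict_right_mono dest!: spec[of _ "\<lambda>j. real j * \<tau>"])

lemma (in prob_space) prob_std_wiener_grid_increment:
  assumes W: "std_wiener M W" and \<tau>: "0 < \<tau>" and A: "A \<in> sets borel"
  shows "prob ((\<lambda>\<omega>. W (real (Suc j) * \<tau>) \<omega> - W (real j * \<tau>) \<omega>) -` A \<inter> space M) = measure (gaussian \<tau>) A"
proof -
  have "real (Suc j) * \<tau> - real j * \<tau> = \<tau>" by (simp add: algebra_simps)
  then have "distr M lborel (\<lambda>\<omega>. W (real (Suc j) * \<tau>) \<omega> - W (real j * \<tau>) \<omega>) = gaussian \<tau>"
    using std_wiener_increment_distr[OF W, of "real j * \<tau>" "real (Suc j) * \<tau>"] \<tau> by simp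
  moreover have "(\<lambda>\<omega>. W (real (Suc j) * \<tau>) \<omega> - W (real j * \<tau>) \<omega>) \<in> borel_measurable M"
    using std_wiener_measurable[OF W] by (intro borel_measurable_diff)
  ultimately show ?thesis
    using A measure_distr[of "\<lambda>\<omega>. W (real (Suc j) * \<tau>) \<omega> - W (real j * \<tau>) \<omega>" M lborel A] by simp
qed

lemma (in prob_space) prob_wiener_increments_rectangle:
  fixes \<beta> :: "nat \<Rightarrow> real \<Rightarrow> 'a \<Rightarrow> real" and K n :: nat
  assumes W: "\<forall>k\<in>{1..K}. std_wiener M (\<beta> k)"
    and indep: "indep_vars (\<lambda>_. Pi\<^sub>M UNIV (\<lambda>_. borel)) (\<lambda>k \<omega> t. \<beta> k t \<omega>) {1..K}"
    and \<tau>: "0 < \<tau>"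
    and A: "\<And>j k. j < n \<Longrightarrow> k \<in> {1..K} \<Longrightarrow> A j k \<in> sets borel"
  shows "prob {\<omega> \<in> space M. \<forall>j<n. \<forall>k\<in>{1..K}. \<beta> k (real (Suc j) * \<tau>) \<omega> - \<beta> k (real j * \<tau>) \<omega> \<in> A j k}
       = (\<Prod>k\<in>{1..K}. \<Prod>j<n. measure (gaussian \<tau>) (A j k))"
proof (cases "n = 0 \<or> K = 0")
  case True
  then show ?thesis by (auto simp: prob_space)
next
  case False
  let ?incr = "\<lambda>k j \<omega>. \<beta> k (real (Suc j) * \<tau>) \<omega> - \<beta> k (real j * \<tau>) \<omega>"
  define B where "B k = {y \<in> space (Pi\<^sub>M UNIV (\<lambda>_::real. borel :: real measure)).
    \<forall>j<n. y (real (Suc j) * \<tau>) - y (real j * \<tau>) \<in> A j k}" for k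
  have B: "B k \<in> sets (Pi\<^sub>M UNIV (\<lambda>_. borel))" if "k \<in> {1..K}" for k
  proof -
    have [measurable]: "A j k \<in> sets borel" if "j < n" for j
      using A that \<open>k \<in> {1..K}\<close> by blast
    show ?thesis unfolding B_def by measurable
  qed
  have "prob {\<omega> \<in> space M. \<forall>j<n. \<forall>k\<in>{1..K}. ?incr k j \<omega> \<in> A j k}
      = prob (\<Inter>k\<in>{1..K}. (\<lambda>\<omega> t. \<beta> k t \<omega>) -` B k \<inter> space M)"
    using False by (intro arg_cong[where f=prob]) (auto simp: B_def space_PiM)
  also have "\<dots> = (\<Prod>k\<in>{1..K}. prob ((\<lambda>\<omega> t. \<beta> k t \<omega>) -` B k \<inter> space M))"
    using False by (intro indep_varsD_finite[OF indep]) (auto intro: B)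
  also have "\<dots> = (\<Prod>k\<in>{1..K}. prob (\<Inter>j\<in>{..<n}. ?incr k j -` A j k \<inter> space M))"
    using False by (intro prod.cong arg_cong[where f=prob]) (auto simp: B_def space_PiM)
  also have "\<dots> = (\<Prod>k\<in>{1..K}. \<Prod>j<n. prob (?incr k j -` A j k \<inter> space M))"
  proof (intro prod.cong refl)
    fix k assume k: "k \<in> {1..K}"
    show "prob (\<Inter>j\<in>{..<n}. ?incr k j -` A j k \<inter> space M) = (\<Prod>j<n. prob (?incr k j -` A j k \<inter> space M))"
      using False A k W \<tau> by (intro indep_varsD_finite[OF std_wiener_grid_increments_indep]) auto
  qed
  also have "\<dots> = (\<Prod>k\<in>{1..K}. \<Prod>j<n. measure (gaussian \<tau>) (A j k))"
    using W A \<tau> by (intro prod.cong refl prob_std_wiener_grid_increment) auto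
  finally show ?thesis .
qed

definition wiener_increments
    :: "nat \<Rightarrow> (nat \<Rightarrow> real \<Rightarrow> 'w \<Rightarrow> real) \<Rightarrow> real \<Rightarrow> nat \<Rightarrow> 'w \<Rightarrow> nat \<times> nat \<Rightarrow> real" where
  "wiener_increments K \<beta> \<tau> n \<omega> =
     restrict (\<lambda>(j, k). \<beta> k (real (Suc j) * \<tau>) \<omega> - \<beta> k (real j * \<tau>) \<omega>) ({..<n} \<times> {1..K})"

lemma wiener_increments_measurable:
  assumes "\<forall>k\<in>{1..K}. std_wiener M (\<beta> k)"
  shows "wiener_increments K \<beta> \<tau> n \<in> measurable M (Pi\<^sub>M ({..<n} \<times> {1..K}) (\<lambda>_. gaussian t))"
proof -
  have \<beta>: "\<beta> k t \<in> borel_measurable M" if "k \<in> {1..K}" for k t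
    using assms that std_wiener_measurable by blast
  show ?thesis
    unfolding wiener_increments_def
    by (intro measurable_restrict)
      (auto simp: split_beta' measurable_cong_sets[OF refl sets_gaussian] intro!: borel_measurable_diff \<beta>)
qed

lemma (in prob_space) distr_wiener_increments:
  assumes W: "\<forall>k\<in>{1..K}. std_wiener M (\<beta> k)"
    and indep: "indep_vars (\<lambda>_. Pi\<^sub>M UNIV (\<lambda>_. borel)) (\<lambda>k \<omega> t. \<beta> k t \<omega>) {1..K}"
    and \<tau>: "0 < \<tau>"
  shows "distr M (Pi\<^sub>M ({..<n} \<times> {1..K}) (\<lambda>_. gaussian \<tau>)) (wiener_increments K \<beta> \<tau> n)
       = Pi\<^sub>M ({..<n} \<times> {1..K}) (\<lambda>_. gaussian \<tau>)"
proof -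
  interpret G: prob_space "gaussian \<tau>" by (rule prob_space_gaussian[OF \<tau>])
  interpret product_sigma_finite "\<lambda>_. gaussian \<tau>" by (rule product_sigma_finite_gaussian[OF \<tau>])
  let ?N = "{..<n} \<times> {1..K}"
  show ?thesis
  proof (rule PiM_eqI)
    fix A assume A: "\<And>i. i \<in> ?N \<Longrightarrow> A i \<in> sets (gaussian \<tau>)"
    have PiA: "Pi\<^sub>E ?N A \<in> sets (Pi\<^sub>M ?N (\<lambda>_. gaussian \<tau>))"
      using A by (intro sets_PiM_I_finite) auto
    have "emeasure (distr M (Pi\<^sub>M ?N (\<lambda>_. gaussian \<tau>)) (wiener_increments K \<beta> \<tau> n)) (Pi\<^sub>E ?N A)
        = emeasure M (wiener_increments K \<beta> \<tau> n -` Pi\<^sub>E ?N A \<inter> space M)"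
      by (rule emeasure_distr[OF wiener_increments_measurable[OF W] PiA])
    also have "wiener_increments K \<beta> \<tau> n -` Pi\<^sub>E ?N A \<inter> space M
        = {\<omega> \<in> space M. \<forall>j<n. \<forall>k\<in>{1..K}. \<beta> k (real (Suc j) * \<tau>) \<omega> - \<beta> k (real j * \<tau>) \<omega> \<in> A (j, k)}"
      by (auto simp: wiener_increments_def PiE_iff)
    also have "emeasure M \<dots> = prob \<dots>"
      by (rule emeasure_eq_measure)
    also have "\<dots> = (\<Prod>k\<in>{1..K}. \<Prod>j<n. measure (gaussian \<tau>) (A (j, k)))"
      using A by (subst prob_wiener_increments_rectangle[OF W indep \<tau>]) auto
    also have "\<dots> = (\<Prod>i\<in>?N. measure (gaussian \<tau>) (A i))"
      by (subst prod.swap) (simp add: prod.cartesian_product)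
    also have "\<dots> = (\<Prod>i\<in>?N. emeasure (gaussian \<tau>) (A i))"
      by (simp add: G.emeasure_eq_measure prod_ennreal)
    finally show "emeasure (distr M (Pi\<^sub>M ?N (\<lambda>_. gaussian \<tau>)) (wiener_increments K \<beta> \<tau> n)) (Pi\<^sub>E ?N A)
        = (\<Prod>i\<in>?N. emeasure (gaussian \<tau>) (A i))" .
  qed auto
qed

section \<open>The scheme as a function of the increments\<close>

text \<open>\<open>z (j, k)\<close> stands for the increment \<open>\<beta>\<^sub>k ((j + 1) \<tau>) - \<beta>\<^sub>k (j \<tau>)\<close>.\<close>

primrec fmS_of_increments
    :: "(real^'d \<Rightarrow> real^'d) \<Rightarrow> (nat \<Rightarrow> real^'d \<Rightarrow> real^'d \<Rightarrow> real) \<Rightarrow> nat \<Rightarrow> real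
      \<Rightarrow> (real^'d \<Rightarrow> real^'d \<Rightarrow> real) \<Rightarrow> nat \<Rightarrow> (nat \<times> nat \<Rightarrow> real) \<Rightarrow> real^'d \<Rightarrow> real^'d \<Rightarrow> real" where
  "fmS_of_increments E \<sigma> K \<tau> f0 0 z = f0"
| "fmS_of_increments E \<sigma> K \<tau> f0 (Suc n) z =
     (\<lambda>x v. exp (\<Sum>k=1..K. \<sigma> k x v * z (n, k)) * S2 \<tau> E (S1 \<tau> (fmS_of_increments E \<sigma> K \<tau> f0 n z)) x v)"

lemma fmS_of_increments_cong:
  "(\<And>j k. j < n \<Longrightarrow> k \<in> {1..K} \<Longrightarrow> z (j, k) = z' (j, k))
    \<Longrightarrow> fmS_of_increments E \<sigma> K \<tau> f0 n z = fmS_of_increments E \<sigma> K \<tau> f0 n z'"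
  by (induction n) (auto intro!: sum.cong)

lemma fmS_eq_fmS_of_increments:
  "fmS E \<sigma> K \<beta> \<tau> f0 n \<omega> = fmS_of_increments E \<sigma> K \<tau> f0 n (wiener_increments K \<beta> \<tau> n \<omega>)"
proof -
  have "fmS E \<sigma> K \<beta> \<tau> f0 n \<omega> = fmS_of_increments E \<sigma> K \<tau> f0 n
      (\<lambda>(j, k). \<beta> k (real (Suc j) * \<tau>) \<omega> - \<beta> k (real j * \<tau>) \<omega>)"
    by (induction n) simp_all
  also have "\<dots> = fmS_of_increments E \<sigma> K \<tau> f0 n (wiener_increments K \<beta> \<tau> n \<omega>)"
    by (rule fmS_of_increments_cong) (simp add: wiener_increments_def)
  finally show ?thesis .
qed

lemma periodic_x_fmS_of_increments:
  assumes "\<forall>k\<in>{1..K}. periodic_x (\<sigma> k)" "periodic_fun E" "periodic_x f0"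
  shows "periodic_x (fmS_of_increments E \<sigma> K \<tau> f0 n z)"
proof (induction n)
  case 0
  then show ?case using assms by simp
next
  case (Suc n)
  then have "periodic_x (S2 \<tau> E (S1 \<tau> (fmS_of_increments E \<sigma> K \<tau> f0 n z)))"
    using assms(2) by (rule periodic_x_S2_S1)
  with assms(1) show ?case
    by (auto simp: periodic_x_def intro!: sum.cong arg_cong2[where f="(*)"])
qed

lemma fmS_of_increments_measurable:
  fixes E :: "real^'d \<Rightarrow> real^'d" and f0 :: "real^'d \<Rightarrow> real^'d \<Rightarrow> real"
  assumes [measurable]: "case_prod f0 \<in> borel_measurable borel" "E \<in> borel_measurable borel"
    and \<sigma>: "\<And>k. k \<in> {1..K} \<Longrightarrow> case_prod (\<sigma> k) \<in> borel_measurable borel"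
  shows "{..<n} \<times> {1..K} \<subseteq> I \<Longrightarrow>
    (\<lambda>q. fmS_of_increments E \<sigma> K \<tau> f0 n (fst q) (fst (snd q)) (snd (snd q)))
      \<in> borel_measurable (Pi\<^sub>M I (\<lambda>_. gaussian t) \<Otimes>\<^sub>M borel)"
proof (induction n)
  case 0
  show ?case by simp
next
  case (Suc n)
  let ?P = "Pi\<^sub>M I (\<lambda>_. gaussian t) \<Otimes>\<^sub>M (borel :: ((real^'d) \<times> (real^'d)) measure)"
  let ?T = "\<lambda>(x, v). (x - \<tau> *\<^sub>R (v - \<tau> *\<^sub>R E x), v - \<tau> *\<^sub>R E x)"
  have IH: "(\<lambda>q. fmS_of_increments E \<sigma> K \<tau> f0 n (fst q) (fst (snd q)) (snd (snd q))) \<in> borel_measurable ?P"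
  proof (rule Suc.IH)
    show "{..<n} \<times> {1..K} \<subseteq> I" using Suc.prems by (auto simp del: atLeastAtMost_iff)
  qed
  have "(\<lambda>q. (fst q, ?T (snd q))) \<in> measurable ?P ?P"
    unfolding split_beta' by measurable
  from measurable_comp[OF this IH]
  have [measurable]: "(\<lambda>q. fmS_of_increments E \<sigma> K \<tau> f0 n (fst q)
      (fst (snd q) - \<tau> *\<^sub>R (snd (snd q) - \<tau> *\<^sub>R E (fst (snd q)))) (snd (snd q) - \<tau> *\<^sub>R E (fst (snd q))))
      \<in> borel_measurable ?P"
    by (simp add: comp_def split_beta')
  have [measurable]: "(\<lambda>q. \<sigma> k (fst (snd q)) (snd (snd q))) \<in> borel_measurable ?P"
    if "k \<in> {1..K}" for k
    using \<sigma>[OF that] by measurable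
  show ?case
    unfolding fmS_of_increments.simps S2_S1_eq by measurable (use Suc.prems in auto)
qed

lemma borel_measurable_fmS_of_increments:
  fixes E :: "real^'d \<Rightarrow> real^'d" and f0 :: "real^'d \<Rightarrow> real^'d \<Rightarrow> real"
  assumes "case_prod f0 \<in> borel_measurable borel" "E \<in> borel_measurable borel"
    and "\<And>k. k \<in> {1..K} \<Longrightarrow> case_prod (\<sigma> k) \<in> borel_measurable borel"
  shows "case_prod (fmS_of_increments E \<sigma> K \<tau> f0 n z) \<in> borel_measurable borel"
proof -
  have "z \<in> space (Pi\<^sub>M UNIV (\<lambda>_. gaussian 1))" by (simp add: space_PiM)
  from measurable_comp[OF measurable_Pair1'[OF this] fmS_of_increments_measurable[OF assms subset_UNIV]]
  show ?thesis by (simp add: comp_def split_beta')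
qed

lemma L2xv_nn_sq_fmS_of_increments_measurable:
  fixes E :: "real^'d \<Rightarrow> real^'d" and f0 :: "real^'d \<Rightarrow> real^'d \<Rightarrow> real"
  assumes "case_prod f0 \<in> borel_measurable borel" "E \<in> borel_measurable borel"
    and "\<And>k. k \<in> {1..K} \<Longrightarrow> case_prod (\<sigma> k) \<in> borel_measurable borel"
    and "{..<n} \<times> {1..K} \<subseteq> I"
  shows "(\<lambda>z. L2xv_nn_sq (fmS_of_increments E \<sigma> K \<tau> f0 n z)) \<in> borel_measurable (Pi\<^sub>M I (\<lambda>_. gaussian t))"
proof -
  note [measurable] = fmS_of_increments_measurable[OF assms]
  have "(\<lambda>q. ennreal ((fmS_of_increments E \<sigma> K \<tau> f0 n (fst q) (fst (snd q)) (snd (snd q)))\<^sup>2)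
      * indicator (cbox 0 One \<times> UNIV) (snd q)) \<in> borel_measurable (Pi\<^sub>M I (\<lambda>_. gaussian t) \<Otimes>\<^sub>M lborel)"
    by measurable
  from lborel.borel_measurable_nn_integral_fst[OF this]
  show ?thesis by (simp add: L2xv_nn_sq_def nn_integral_mu_xv split_beta')
qed

text \<open>Pointwise in \<open>(x, v)\<close>, \<open>E exp (2 \<Sum>i. c\<^sub>i y\<^sub>i) = exp (2 s\<^sup>2 t)\<close> since \<open>\<Sum>i. c\<^sub>i\<^sup>2 = s\<^sup>2\<close>
  is constant, so by Fubini the noise factor just rescales the squared norm.\<close>

lemma nn_integral_L2xv_nn_sq_exp_gaussian:
  fixes W :: "real^'d \<Rightarrow> real^'d \<Rightarrow> real" and c :: "'i \<Rightarrow> real^'d \<Rightarrow> real^'d \<Rightarrow> real"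
  assumes [measurable]: "case_prod W \<in> borel_measurable borel"
    and c: "\<And>i. i \<in> J \<Longrightarrow> case_prod (c i) \<in> borel_measurable borel"
    and J: "finite J"
    and sum_sq: "\<And>x v. (\<Sum>i\<in>J. (c i x v)\<^sup>2) = s\<^sup>2"
    and t: "0 < t"
  shows "(\<integral>\<^sup>+y. L2xv_nn_sq (\<lambda>x v. exp (\<Sum>i\<in>J. c i x v * y i) * W x v) \<partial>Pi\<^sub>M J (\<lambda>_. gaussian t))
       = ennreal (exp (2 * s\<^sup>2 * t)) * L2xv_nn_sq W"
proof -
  interpret product_sigma_finite "\<lambda>_. gaussian t" by (rule product_sigma_finite_gaussian[OF t])
  interpret PJ: finite_product_sigma_finite "\<lambda>_. gaussian t" J by standard (rule J)
  interpret pair_sigma_finite "Pi\<^sub>M J (\<lambda>_. gaussian t)" "lborel :: ((real^'d) \<times> (real^'d)) measure" ..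
  define F where "F y p = ennreal (exp (\<Sum>i\<in>J. (2 * c i (fst p) (snd p)) * y i))
    * (ennreal ((case_prod W p)\<^sup>2) * indicator (cbox 0 One \<times> UNIV) p)" for y p
  have F: "ennreal ((case_prod (\<lambda>x v. exp (\<Sum>i\<in>J. c i x v * y i) * W x v) p)\<^sup>2)
      * indicator (cbox 0 One \<times> UNIV) p = F y p" for y p
    by (simp add: F_def split_beta power_mult_distrib ennreal_mult' exp_double[symmetric] sum_distrib_left mult_ac)
  have [measurable]: "(\<lambda>q. c i (fst (snd q)) (snd (snd q))) \<in> borel_measurable (Pi\<^sub>M J (\<lambda>_. gaussian t) \<Otimes>\<^sub>M lborel)"
    if "i \<in> J" for i
    using c[OF that] by measurable
  have "case_prod F \<in> borel_measurable (Pi\<^sub>M J (\<lambda>_. gaussian t) \<Otimes>\<^sub>M lborel)"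
    unfolding split_beta' F_def by measurable
  then have "(\<integral>\<^sup>+y. L2xv_nn_sq (\<lambda>x v. exp (\<Sum>i\<in>J. c i x v * y i) * W x v) \<partial>Pi\<^sub>M J (\<lambda>_. gaussian t))
      = (\<integral>\<^sup>+p. \<integral>\<^sup>+y. F y p \<partial>Pi\<^sub>M J (\<lambda>_. gaussian t) \<partial>lborel)"
    unfolding L2xv_nn_sq_def nn_integral_mu_xv F by (rule Fubini'[symmetric])
  also have "\<dots> = (\<integral>\<^sup>+p. ennreal (exp (2 * s\<^sup>2 * t)) * (ennreal ((case_prod W p)\<^sup>2) * indicator (cbox 0 One \<times> UNIV) p) \<partial>lborel)"
  proof (intro nn_integral_cong)
    fix p :: "(real^'d) \<times> (real^'d)"
    have "(\<integral>\<^sup>+y. ennreal (exp (\<Sum>i\<in>J. (2 * c i (fst p) (snd p)) * y i)) \<partial>Pi\<^sub>M J (\<lambda>_. gaussian t))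
        = ennreal (exp (2 * s\<^sup>2 * t))"
      using J t sum_sq[of "fst p" "snd p"]
      by (simp add: nn_integral_exp_sum_gaussian power_mult_distrib sum_distrib_left[symmetric])
    then show "(\<integral>\<^sup>+y. F y p \<partial>Pi\<^sub>M J (\<lambda>_. gaussian t))
        = ennreal (exp (2 * s\<^sup>2 * t)) * (ennreal ((case_prod W p)\<^sup>2) * indicator (cbox 0 One \<times> UNIV) p)"
      unfolding F_def by (subst nn_integral_multc) auto
  qed
  also have "\<dots> = ennreal (exp (2 * s\<^sup>2 * t)) * L2xv_nn_sq W"
    by (simp add: L2xv_nn_sq_def nn_integral_mu_xv nn_integral_cmult)
  finally show ?thesis .
qed

lemma nn_integral_L2xv_nn_sq_fmS_of_increments_Suc:
  fixes E :: "real^'d \<Rightarrow> real^'d" and f0 :: "real^'d \<Rightarrow> real^'d \<Rightarrow> real"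
    and \<sigma> :: "nat \<Rightarrow> real^'d \<Rightarrow> real^'d \<Rightarrow> real" and n K :: nat
  assumes f0: "case_prod f0 \<in> borel_measurable borel" and E: "E \<in> borel_measurable borel"
    and \<sigma>: "\<And>k. k \<in> {1..K} \<Longrightarrow> case_prod (\<sigma> k) \<in> borel_measurable borel"
    and periodic: "\<forall>k\<in>{1..K}. periodic_x (\<sigma> k)" "periodic_fun E" "periodic_x f0"
    and sum_sq: "\<And>x v. (\<Sum>k=1..K. (\<sigma> k x v)\<^sup>2) = s\<^sup>2"
    and \<tau>: "0 < \<tau>"
  defines "N \<equiv> {..<n} \<times> {1..K}" and "J \<equiv> {n} \<times> {1..K}"
  shows "(\<integral>\<^sup>+y. L2xv_nn_sq (fmS_of_increments E \<sigma> K \<tau> f0 (Suc n) (merge N J (x, y))) \<partial>Pi\<^sub>M J (\<lambda>_. gaussian \<tau>))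
       = ennreal (exp (2 * s\<^sup>2 * \<tau>)) * L2xv_nn_sq (fmS_of_increments E \<sigma> K \<tau> f0 n x)"
proof -
  let ?G = "fmS_of_increments E \<sigma> K \<tau> f0"
  let ?W = "S2 \<tau> E (S1 \<tau> (?G n x))"
  have Gx: "case_prod (?G n x) \<in> borel_measurable borel"
    by (rule borel_measurable_fmS_of_increments[OF f0 E \<sigma>])
  have "?G n (merge N J (x, y)) = ?G n x" for y
    by (rule fmS_of_increments_cong) (simp add: N_def J_def merge_def)
  moreover have "(\<Sum>k=1..K. \<sigma> k a b * merge N J (x, y) (n, k)) = (\<Sum>i\<in>J. \<sigma> (snd i) a b * y i)" for y a b
    by (simp add: J_def sum_Times_singleton N_def merge_def)
  ultimately have merge: "?G (Suc n) (merge N J (x, y)) = (\<lambda>a b. exp (\<Sum>i\<in>J. \<sigma> (snd i) a b * y i) * ?W a b)"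
    for y
    by simp
  have "case_prod ?W \<in> borel_measurable borel"
  proof -
    note [measurable] = Gx E
    show ?thesis unfolding S2_S1_eq split_beta' by measurable
  qed
  then have "(\<integral>\<^sup>+y. L2xv_nn_sq (\<lambda>a b. exp (\<Sum>i\<in>J. \<sigma> (snd i) a b * y i) * ?W a b) \<partial>Pi\<^sub>M J (\<lambda>_. gaussian \<tau>))
      = ennreal (exp (2 * s\<^sup>2 * \<tau>)) * L2xv_nn_sq ?W"
    by (rule nn_integral_L2xv_nn_sq_exp_gaussian) (use \<sigma> sum_sq \<tau> in \<open>auto simp: J_def sum_Times_singleton\<close>)
  also have "L2xv_nn_sq ?W = L2xv_nn_sq (?G n x)"
    by (rule L2xv_nn_sq_S2_S1[OF Gx E periodic_x_fmS_of_increments[OF periodic]])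
  finally show ?thesis
    by (simp only: merge)
qed

lemma nn_integral_L2xv_nn_sq_fmS_of_increments:
  fixes E :: "real^'d \<Rightarrow> real^'d" and f0 :: "real^'d \<Rightarrow> real^'d \<Rightarrow> real"
    and \<sigma> :: "nat \<Rightarrow> real^'d \<Rightarrow> real^'d \<Rightarrow> real"
  assumes f0: "case_prod f0 \<in> borel_measurable borel" and E: "E \<in> borel_measurable borel"
    and \<sigma>: "\<And>k. k \<in> {1..K} \<Longrightarrow> case_prod (\<sigma> k) \<in> borel_measurable borel"
    and periodic: "\<forall>k\<in>{1..K}. periodic_x (\<sigma> k)" "periodic_fun E" "periodic_x f0"
    and sum_sq: "\<And>x v. (\<Sum>k=1..K. (\<sigma> k x v)\<^sup>2) = s\<^sup>2"
    and \<tau>: "0 < \<tau>"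
  shows "(\<integral>\<^sup>+z. L2xv_nn_sq (fmS_of_increments E \<sigma> K \<tau> f0 n z) \<partial>Pi\<^sub>M ({..<n} \<times> {1..K}) (\<lambda>_. gaussian \<tau>))
       = ennreal (exp (2 * s\<^sup>2 * (real n * \<tau>))) * L2xv_nn_sq f0"
proof (induction n)
  case 0
  then show ?case by (simp add: PiM_empty)
next
  case (Suc n)
  interpret product_sigma_finite "\<lambda>_. gaussian \<tau>" by (rule product_sigma_finite_gaussian[OF \<tau>])
  define N where "N = {..<n} \<times> {1..K}"
  define J where "J = {n} \<times> {1..K}"
  let ?G = "fmS_of_increments E \<sigma> K \<tau> f0"
  note G_measurable = L2xv_nn_sq_fmS_of_increments_measurable[OF f0 E \<sigma>]
  have "{..<Suc n} \<times> {1..K} = N \<union> J" by (auto simp: N_def J_def)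
  then have "(\<integral>\<^sup>+z. L2xv_nn_sq (?G (Suc n) z) \<partial>Pi\<^sub>M ({..<Suc n} \<times> {1..K}) (\<lambda>_. gaussian \<tau>))
      = (\<integral>\<^sup>+x. \<integral>\<^sup>+y. L2xv_nn_sq (?G (Suc n) (merge N J (x, y))) \<partial>Pi\<^sub>M J (\<lambda>_. gaussian \<tau>) \<partial>Pi\<^sub>M N (\<lambda>_. gaussian \<tau>))"
    by (simp only:, intro product_nn_integral_fold G_measurable) (auto simp: N_def J_def)
  also have "\<dots> = (\<integral>\<^sup>+x. ennreal (exp (2 * s\<^sup>2 * \<tau>)) * L2xv_nn_sq (?G n x) \<partial>Pi\<^sub>M N (\<lambda>_. gaussian \<tau>))"
    unfolding N_def J_def
    by (intro nn_integral_cong nn_integral_L2xv_nn_sq_fmS_of_increments_Suc[OF f0 E \<sigma> periodic sum_sq \<tau>])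
  also have "\<dots> = ennreal (exp (2 * s\<^sup>2 * \<tau>)) * (\<integral>\<^sup>+x. L2xv_nn_sq (?G n x) \<partial>Pi\<^sub>M N (\<lambda>_. gaussian \<tau>))"
    by (intro nn_integral_cmult G_measurable) (auto simp: N_def)
  also have "\<dots> = ennreal (exp (2 * s\<^sup>2 * \<tau>)) * (ennreal (exp (2 * s\<^sup>2 * (real n * \<tau>))) * L2xv_nn_sq f0)"
    by (simp only: N_def Suc.IH)
  also have "\<dots> = ennreal (exp (2 * s\<^sup>2 * \<tau>) * exp (2 * s\<^sup>2 * (real n * \<tau>))) * L2xv_nn_sq f0"
    by (simp add: ennreal_mult mult.assoc)
  also have "exp (2 * s\<^sup>2 * \<tau>) * exp (2 * s\<^sup>2 * (real n * \<tau>)) = exp (2 * s\<^sup>2 * (real (Suc n) * \<tau>))"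
    by (simp add: exp_add[symmetric] algebra_simps)
  finally show ?case .
qed

lemma fmS_nonneg:
  assumes "\<And>x v. 0 \<le> f0 x v"
  shows "0 \<le> fmS E \<sigma> K \<beta> \<tau> f0 n \<omega> x v"
  using assms by (induction n arbitrary: x v) (simp_all add: S1_def S2_def)

lemma fmS_measurable:
  fixes E :: "real^'d \<Rightarrow> real^'d" and f0 :: "real^'d \<Rightarrow> real^'d \<Rightarrow> real"
  assumes W: "\<forall>k\<in>{1..K}. std_wiener M (\<beta> k)"
    and f0: "case_prod f0 \<in> borel_measurable borel" and E: "E \<in> borel_measurable borel"
    and \<sigma>: "\<And>k. k \<in> {1..K} \<Longrightarrow> case_prod (\<sigma> k) \<in> borel_measurable borel"
  shows "(\<lambda>(\<omega>, x, v). fmS E \<sigma> K \<beta> \<tau> f0 n \<omega> x v) \<in> borel_measurable (M \<Otimes>\<^sub>M mu_xv)"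
proof -
  let ?P = "Pi\<^sub>M ({..<n} \<times> {1..K}) (\<lambda>_. gaussian \<tau>) \<Otimes>\<^sub>M (borel :: ((real^'d) \<times> (real^'d)) measure)"
  have "(\<lambda>q. (wiener_increments K \<beta> \<tau> n (fst q), snd q)) \<in> measurable (M \<Otimes>\<^sub>M mu_xv) ?P"
    by (intro measurable_Pair measurable_compose[OF measurable_fst wiener_increments_measurable[OF W]]
        measurable_compose[OF measurable_snd measurable_ident_mu_xv])
  from measurable_comp[OF this fmS_of_increments_measurable[OF f0 E \<sigma> order_refl]]
  show ?thesis by (simp add: comp_def split_beta' fmS_eq_fmS_of_increments)
qed

lemma (in prob_space) nn_integral_L2xv_nn_sq_fmS:
  fixes E :: "real^'d \<Rightarrow> real^'d" and f0 :: "real^'d \<Rightarrow> real^'d \<Rightarrow> real"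
    and \<sigma> :: "nat \<Rightarrow> real^'d \<Rightarrow> real^'d \<Rightarrow> real" and \<beta> :: "nat \<Rightarrow> real \<Rightarrow> 'a \<Rightarrow> real"
  assumes W: "\<forall>k\<in>{1..K}. std_wiener M (\<beta> k)"
    and indep: "indep_vars (\<lambda>_. Pi\<^sub>M UNIV (\<lambda>_. borel)) (\<lambda>k \<omega> t. \<beta> k t \<omega>) {1..K}"
    and f0: "case_prod f0 \<in> borel_measurable borel" and E: "E \<in> borel_measurable borel"
    and \<sigma>: "\<And>k. k \<in> {1..K} \<Longrightarrow> case_prod (\<sigma> k) \<in> borel_measurable borel"
    and periodic: "\<forall>k\<in>{1..K}. periodic_x (\<sigma> k)" "periodic_fun E" "periodic_x f0"
    and sum_sq: "\<And>x v. (\<Sum>k=1..K. (\<sigma> k x v)\<^sup>2) = s\<^sup>2"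
    and \<tau>: "0 < \<tau>"
  shows "(\<lambda>\<omega>. L2xv_nn_sq (fmS E \<sigma> K \<beta> \<tau> f0 n \<omega>)) \<in> borel_measurable M"
    and "(\<integral>\<^sup>+\<omega>. L2xv_nn_sq (fmS E \<sigma> K \<beta> \<tau> f0 n \<omega>) \<partial>M)
       = ennreal (exp (2 * s\<^sup>2 * (real n * \<tau>))) * L2xv_nn_sq f0"
proof -
  let ?P = "Pi\<^sub>M ({..<n} \<times> {1..K}) (\<lambda>_. gaussian \<tau>)"
  have Z: "wiener_increments K \<beta> \<tau> n \<in> measurable M ?P"
    by (rule wiener_increments_measurable[OF W])
  have L: "(\<lambda>z. L2xv_nn_sq (fmS_of_increments E \<sigma> K \<tau> f0 n z)) \<in> borel_measurable ?P"
    by (rule L2xv_nn_sq_fmS_of_increments_measurable[OF f0 E \<sigma> order_refl])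
  from measurable_comp[OF Z L]
  show "(\<lambda>\<omega>. L2xv_nn_sq (fmS E \<sigma> K \<beta> \<tau> f0 n \<omega>)) \<in> borel_measurable M"
    by (simp add: comp_def fmS_eq_fmS_of_increments)
  have "(\<integral>\<^sup>+\<omega>. L2xv_nn_sq (fmS E \<sigma> K \<beta> \<tau> f0 n \<omega>) \<partial>M)
      = (\<integral>\<^sup>+z. L2xv_nn_sq (fmS_of_increments E \<sigma> K \<tau> f0 n z) \<partial>distr M ?P (wiener_increments K \<beta> \<tau> n))"
    unfolding fmS_eq_fmS_of_increments by (rule nn_integral_distr[OF Z, symmetric]) (use L in simp)
  also have "\<dots> = ennreal (exp (2 * s\<^sup>2 * (real n * \<tau>))) * L2xv_nn_sq f0"
    unfolding distr_wiener_increments[OF W indep \<tau>]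
    by (rule nn_integral_L2xv_nn_sq_fmS_of_increments[OF f0 E \<sigma> periodic sum_sq \<tau>])
  finally show "(\<integral>\<^sup>+\<omega>. L2xv_nn_sq (fmS E \<sigma> K \<beta> \<tau> f0 n \<omega>) \<partial>M)
      = ennreal (exp (2 * s\<^sup>2 * (real n * \<tau>))) * L2xv_nn_sq f0" .
qed

lemma (in prob_space) fmS_L2xv_moment:
  fixes E :: "real^'d \<Rightarrow> real^'d" and f0 :: "real^'d \<Rightarrow> real^'d \<Rightarrow> real"
    and \<sigma> :: "nat \<Rightarrow> real^'d \<Rightarrow> real^'d \<Rightarrow> real" and \<beta> :: "nat \<Rightarrow> real \<Rightarrow> 'a \<Rightarrow> real"
  assumes W: "\<forall>k\<in>{1..K}. std_wiener M (\<beta> k)"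
    and indep: "indep_vars (\<lambda>_. Pi\<^sub>M UNIV (\<lambda>_. borel)) (\<lambda>k \<omega> t. \<beta> k t \<omega>) {1..K}"
    and f0_L2: "in_L2xv f0" and E: "E \<in> borel_measurable borel"
    and \<sigma>: "\<And>k. k \<in> {1..K} \<Longrightarrow> case_prod (\<sigma> k) \<in> borel_measurable borel"
    and periodic: "\<forall>k\<in>{1..K}. periodic_x (\<sigma> k)" "periodic_fun E" "periodic_x f0"
    and sum_sq: "\<And>x v. (\<Sum>k=1..K. (\<sigma> k x v)\<^sup>2) = s\<^sup>2"
    and \<tau>: "0 < \<tau>"
  shows "(AE \<omega> in M. in_L2xv (fmS E \<sigma> K \<beta> \<tau> f0 n \<omega>))
    \<and> (\<lambda>(\<omega>, x, v). fmS E \<sigma> K \<beta> \<tau> f0 n \<omega> x v) \<in> borel_measurable (M \<Otimes>\<^sub>M mu_xv)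
    \<and> integrable M (\<lambda>\<omega>. L2xv_sq (fmS E \<sigma> K \<beta> \<tau> f0 n \<omega>))
    \<and> (\<integral>\<omega>. L2xv_sq (fmS E \<sigma> K \<beta> \<tau> f0 n \<omega>) \<partial>M) = exp (2 * s\<^sup>2 * (real n * \<tau>)) * L2xv_sq f0"
proof -
  let ?f = "fmS E \<sigma> K \<beta> \<tau> f0 n"
  have f0_mu_xv: "case_prod f0 \<in> borel_measurable mu_xv" and f0_finite: "L2xv_nn_sq f0 < \<infinity>"
    using f0_L2 by (simp_all add: in_L2xv_iff)
  have f0: "case_prod f0 \<in> borel_measurable borel"
    by (rule borel_measurable_periodic_x[OF f0_mu_xv periodic(3)])
  have f_mu_xv: "case_prod (?f \<omega>) \<in> borel_measurable mu_xv" for \<omega>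
    using measurable_comp[OF measurable_ident_mu_xv borel_measurable_fmS_of_increments[OF f0 E \<sigma>]]
    by (simp add: comp_def fmS_eq_fmS_of_increments)
  note moment = nn_integral_L2xv_nn_sq_fmS[OF W indep f0 E \<sigma> periodic sum_sq \<tau>, of n]
  have "(\<integral>\<^sup>+\<omega>. L2xv_nn_sq (?f \<omega>) \<partial>M) < \<infinity>"
    using moment(2) f0_finite by (simp add: ennreal_mult_less_top)
  note finite = nn_integral_finite_imp_enn2real[OF moment(1) this]
  have "AE \<omega> in M. in_L2xv (?f \<omega>)"
    using finite(1) f_mu_xv by (simp add: in_L2xv_iff)
  moreover have "integrable M (\<lambda>\<omega>. L2xv_sq (?f \<omega>))"
    using finite(2) by (simp add: L2xv_sq_eq_enn2real[OF f_mu_xv])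
  moreover have "(\<integral>\<omega>. L2xv_sq (?f \<omega>) \<partial>M) = exp (2 * s\<^sup>2 * (real n * \<tau>)) * L2xv_sq f0"
    using finite(3) moment(2)
    by (simp add: L2xv_sq_eq_enn2real[OF f_mu_xv] L2xv_sq_eq_enn2real[OF f0_mu_xv] enn2real_mult)
  moreover have "(\<lambda>(\<omega>, x, v). ?f \<omega> x v) \<in> borel_measurable (M \<Otimes>\<^sub>M mu_xv)"
    by (rule fmS_measurable[OF W f0 E \<sigma>])
  ultimately show ?thesis by blast
qed

theorem proposition5p4:
  fixes E :: "real^'d \<Rightarrow> real^'d"
    and \<sigma> :: "nat \<Rightarrow> real^'d \<Rightarrow> real^'d \<Rightarrow> real"
    and K :: nat
    and M :: "'w measure"
    and \<beta> :: "nat \<Rightarrow> real \<Rightarrow> 'w \<Rightarrow> real"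
    and f0 :: "real^'d \<Rightarrow> real^'d \<Rightarrow> real"
    and \<tau> :: real
  assumes "prob_space M"
    and "\<forall>k\<in>{1..K}. std_wiener M (\<beta> k)"
    and "prob_space.indep_vars M (\<lambda>_. Pi\<^sub>M UNIV (\<lambda>_. borel)) (\<lambda>k \<omega> t. \<beta> k t \<omega>) {1..K}"
    and "\<forall>i. smooth_fun (\<lambda>x. E x $ i)"
    and "periodic_fun E"
    and "\<forall>k\<in>{1..K}. smooth_fun (case_prod (\<sigma> k)) \<and> bounded (range (case_prod (\<sigma> k)))
                       \<and> periodic_x (\<sigma> k)"
    and "periodic_x f0"
    and "0 < \<tau>" and "\<tau> < 1"
  shows "((\<forall>x v. f0 x v \<ge> 0) \<longrightarrow>
            (\<forall>n. AE \<omega> in M. \<forall>x v. fmS E \<sigma> K \<beta> \<tau> f0 n \<omega> x v \<ge> 0))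
       \<and> (\<forall>s::real. in_L2xv f0 \<and> (\<forall>x v. (\<Sum>k=1..K. (\<sigma> k x v)\<^sup>2) = s\<^sup>2) \<longrightarrow>
            (\<forall>n. (AE \<omega> in M. in_L2xv (fmS E \<sigma> K \<beta> \<tau> f0 n \<omega>))
               \<and> (\<lambda>(\<omega>, x, v). fmS E \<sigma> K \<beta> \<tau> f0 n \<omega> x v) \<in> borel_measurable (M \<Otimes>\<^sub>M mu_xv)
               \<and> integrable M (\<lambda>\<omega>. L2xv_sq (fmS E \<sigma> K \<beta> \<tau> f0 n \<omega>))
               \<and> (\<integral>\<omega>. L2xv_sq (fmS E \<sigma> K \<beta> \<tau> f0 n \<omega>) \<partial>M)
                   = exp (2 * s\<^sup>2 * (real n * \<tau>)) * L2xv_sq f0))"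
proof -
  interpret prob_space M by fact
  have "continuous_on UNIV (\<lambda>x. \<chi> i. E x $ i)"
    using assms(4) by (intro continuous_on_vec_lambda smooth_fun_continuous) blast
  then have E: "E \<in> borel_measurable borel"
    by (simp add: borel_measurable_continuous_onI)
  have \<sigma>: "case_prod (\<sigma> k) \<in> borel_measurable borel" if "k \<in> {1..K}" for k
    using assms(6) that by (blast intro: borel_measurable_continuous_onI smooth_fun_continuous)
  have periodic: "\<forall>k\<in>{1..K}. periodic_x (\<sigma> k)"
    using assms(6) by blast
  show ?thesis
    using fmS_L2xv_moment[OF assms(2,3) _ E \<sigma> periodic assms(5,7) _ assms(8)]
    by (auto intro!: AE_I2 fmS_nonneg)
qed

end
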